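(* Let $T,M,\delta,\tau$ be as in the setup, let $\rho^*=\mathrm{OPT}$, and let $\zeta\ge 0$. Let $\mathcal{H}$ be the family of all $k$-element subsets $U\subseteq V_T$ with $\mathcal{S}_U\neq\emptyset$. Build the directed flow network $Z$ with vertex set $\{s\}\cup\{x_U:U\in\mathcal{H}\}\cup V_T\cup\{z\}$ and arcs: $(s,x_U)$ with capacity $\tau(U)$ for each $U\in\mathcal{H}$; $(x_U,v)$ with capacity $+\infty$ for each $U\in\mathcal{H}$ and $v\in U$; $(v,z)$ with capacity $\zeta$ for each $v\in V_T$. Let $(\mathsf{S},\mathsf{Z})$ be a minimum $s$–$z$ cut of $Z$ (a partition of its vertices with $s\in\mathsf{S}$, $z\in\mathsf{Z}$ minimizing the total capacity of arcs from $\mathsf{S}$ to $\mathsf{Z}$). If $\mathsf{S}\cap V_T\neq\emptyset$ then $\zeta\le\rho^*$; otherwise $\zeta\ge\rho^*$.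
   Context: Setup. A temporal network is a pair $T=(V_T,E_T)$ where $V_T$ is a finite set of $n$ vertices and $E_T$ is a finite set of temporal edges $(u,v,t)$ with $u,v\in V_T$ and timestamp $t\in\mathbb{R}_{>0}$; timestamps are assumed distinct. A $k$-vertex $\ell$-edge temporal motif ($k,\ell\ge 2$) is a pair $M=(K,\sigma)$ where $K=(V_K,E_K)$ is a directed, weakly connected multigraph with $|V_K|=k$, $|E_K|=\ell$, and $\sigma$ is an ordering of $E_K$; equivalently $M$ is the sequence $\langle(x_1,y_1),\dots,(x_\ell,y_\ell)\rangle$ of its edges in the order $\sigma$. Given $\delta>0$, a $\delta$-instance of $M$ in a temporal network is a sequence $S=\langle(x'_1,y'_1,t'_1),\dots,(x'_\ell,y'_\ell,t'_\ell)\rangle$ of $\ell$ distinct temporal edges of that network with $t'_1<\dots<t'_\ell$ such that (1) there is a bijection $h$ from the set of vertices appearing in $S$ onto $V_K$ with $h(x'_i)=x_i$ and $h(y'_i)=y_i$ for all $i\in[\ell]$, and (2) $t'_\ell-t'_1\le\delta$. We write $v\in S$ if $v$ is an endpoint of some edge of $S$; every $\delta$-instance contains exactly $k$ vertices. For $W\subseteq V_T$, $T[W]=(W,\{(u,v,t)\in E_T:u,v\in W\})$ is the induced temporal subnetwork and $\mathcal{S}_W$ is the set of $\delta$-instances of $M$ in $T[W]$. A weighting function $\tau$ assigns a weight $\tau(S)>0$ to each $\delta$-instance $S$ of $M$ in $T$; for $W\subseteq V_T$, $\tau(W)=\sum_{S\in\mathcal{S}_W}\tau(S)$. The temporal motif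 degree of $v$ in $T[W]$ is $C_W(v)=\sum_{S\in\mathcal{S}_W:\,v\in S}\tau(S)$. The density of a nonempty $W\subseteq V_T$ is $\rho(W)=\tau(W)/|W|$, and $\mathrm{OPT}=\max_{\emptyset\ne W\subseteq V_T}\rho(W)$ is the optimal value of the Temporal Motif Densest Subnetwork (TMDS) problem. *)

theory Defs
  imports Complex_Main "HOL-Library.Extended_Real"
begin

type_synonym 'v tedge = "'v \<times> 'v \<times> real"

definition temporal_network :: "'v set \<Rightarrow> 'v tedge set \<Rightarrow> bool" where
  "temporal_network V E \<longleftrightarrow> finite V \<and> finite E \<and>
     (\<forall>(u,v,t)\<in>E. u \<in> V \<and> v \<in> V \<and> t > 0) \<and>
     (\<forall>e1\<in>E. \<forall>e2\<in>E. snd (snd e1) = snd (snd e2) \<longrightarrow> e1 = e2)"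

text \<open>A motif is the list of its edges in the order sigma; its vertex set V_K.\<close>
definition motif_vertices :: "('m \<times> 'm) list \<Rightarrow> 'm set" where
  "motif_vertices M = fst ` set M \<union> snd ` set M"

definition weakly_connected_motif :: "('m \<times> 'm) list \<Rightarrow> bool" where
  "weakly_connected_motif M \<longleftrightarrow>
     (\<forall>a\<in>motif_vertices M. \<forall>b\<in>motif_vertices M.
        (a, b) \<in> (set M \<union> (set M)\<inverse>)\<^sup>*)"

definition temporal_motif :: "('m \<times> 'm) list \<Rightarrow> nat \<Rightarrow> nat \<Rightarrow> bool" where
  "temporal_motif M k l \<longleftrightarrow> k \<ge> 2 \<and> l \<ge> 2 \<and> length M = l \<and>
     card (motif_vertices M) = k \<and> weakly_connected_motif M"

definition inst_vertices :: "'v tedge list \<Rightarrow> 'v set" where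
  "inst_vertices S = (\<lambda>e. fst e) ` set S \<union> (\<lambda>e. fst (snd e)) ` set S"

definition induced_edges :: "'v tedge set \<Rightarrow> 'v set \<Rightarrow> 'v tedge set" where
  "induced_edges E W = {(u,v,t) \<in> E. u \<in> W \<and> v \<in> W}"

definition is_delta_instance :: "'v tedge set \<Rightarrow> ('m \<times> 'm) list \<Rightarrow> real \<Rightarrow> 'v tedge list \<Rightarrow> bool" where
  "is_delta_instance E' M \<delta> S \<longleftrightarrow>
     length S = length M \<and> distinct S \<and> set S \<subseteq> E' \<and>
     sorted_wrt (\<lambda>e1 e2. snd (snd e1) < snd (snd e2)) S \<and>
     (\<exists>h. bij_betw h (inst_vertices S) (motif_vertices M) \<and>
        (\<forall>i<length S. h (fst (S!i)) = fst (M!i) \<and> h (fst (snd (S!i))) = snd (M!i))) \<and>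
     snd (snd (last S)) - snd (snd (hd S)) \<le> \<delta>"

definition instances :: "'v tedge set \<Rightarrow> ('m \<times> 'm) list \<Rightarrow> real \<Rightarrow> 'v set \<Rightarrow> 'v tedge list set" where
  "instances E M \<delta> W = {S. is_delta_instance (induced_edges E W) M \<delta> S}"

definition tau_set :: "'v tedge set \<Rightarrow> ('m \<times> 'm) list \<Rightarrow> real \<Rightarrow> ('v tedge list \<Rightarrow> real) \<Rightarrow> 'v set \<Rightarrow> real" where
  "tau_set E M \<delta> \<tau> W = (\<Sum>S\<in>instances E M \<delta> W. \<tau> S)"

definition density :: "'v tedge set \<Rightarrow> ('m \<times> 'm) list \<Rightarrow> real \<Rightarrow> ('v tedge list \<Rightarrow> real) \<Rightarrow> 'v set \<Rightarrow> real" where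
  "density E M \<delta> \<tau> W = tau_set E M \<delta> \<tau> W / real (card W)"

definition OPT :: "'v set \<Rightarrow> 'v tedge set \<Rightarrow> ('m \<times> 'm) list \<Rightarrow> real \<Rightarrow> ('v tedge list \<Rightarrow> real) \<Rightarrow> real" where
  "OPT V E M \<delta> \<tau> = Max {density E M \<delta> \<tau> W | W. W \<subseteq> V \<and> W \<noteq> {}}"

definition H_family :: "'v set \<Rightarrow> 'v tedge set \<Rightarrow> ('m \<times> 'm) list \<Rightarrow> real \<Rightarrow> nat \<Rightarrow> 'v set set" where
  "H_family V E M \<delta> k = {U. U \<subseteq> V \<and> card U = k \<and> instances E M \<delta> U \<noteq> {}}"

datatype 'v znode = Src | Sink | XU "'v set" | Vt 'v

definition Z_nodes :: "'v set \<Rightarrow> 'v set set \<Rightarrow> 'v znode set" where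
  "Z_nodes V H = {Src, Sink} \<union> XU ` H \<union> Vt ` V"

definition Z_arcs :: "'v set \<Rightarrow> 'v set set \<Rightarrow> ('v znode \<times> 'v znode) set" where
  "Z_arcs V H = {(Src, XU U) | U. U \<in> H} \<union> {(XU U, Vt v) | U v. U \<in> H \<and> v \<in> U}
                \<union> {(Vt v, Sink) | v. v \<in> V}"

text \<open>Capacities (only meaningful on arcs).\<close>
fun Z_cap :: "('v set \<Rightarrow> real) \<Rightarrow> real \<Rightarrow> 'v znode \<times> 'v znode \<Rightarrow> ereal" where
  "Z_cap tw \<zeta> (Src, XU U) = ereal (tw U)"
| "Z_cap tw \<zeta> (XU U, Vt v) = \<infinity>"
| "Z_cap tw \<zeta> (Vt v, Sink) = ereal \<zeta>"
| "Z_cap tw \<zeta> _ = 0"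

definition is_sz_cut :: "'v znode set \<Rightarrow> 'v znode set \<Rightarrow> bool" where
  "is_sz_cut N C \<longleftrightarrow> C \<subseteq> N \<and> Src \<in> C \<and> Sink \<notin> C"

definition cut_capacity :: "'v znode set \<Rightarrow> ('v znode \<times> 'v znode) set \<Rightarrow>
    ('v znode \<times> 'v znode \<Rightarrow> ereal) \<Rightarrow> 'v znode set \<Rightarrow> ereal" where
  "cut_capacity N A cap C = (\<Sum>a\<in>A \<inter> (C \<times> (N - C)). cap a)"

definition is_min_cut :: "'v znode set \<Rightarrow> ('v znode \<times> 'v znode) set \<Rightarrow>
    ('v znode \<times> 'v znode \<Rightarrow> ereal) \<Rightarrow> 'v znode set \<Rightarrow> bool" where
  "is_min_cut N A cap C \<longleftrightarrow> is_sz_cut N C \<and>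
     (\<forall>C'. is_sz_cut N C' \<longrightarrow> cut_capacity N A cap C \<le> cut_capacity N A cap C')"

end

theory Submission
  imports Defs
begin

text \<open>For \<open>W \<subseteq> V\<close> the cut \<open>C\<^sub>W\<close> consisting of \<open>s\<close>, the nodes \<open>x\<^sub>U\<close> with \<open>U \<subseteq> W\<close> and
  the vertices of \<open>W\<close> has capacity \<open>\<tau>(V) - \<tau>(W) + \<zeta> |W|\<close>, because every instance lies inside
  exactly one member of \<open>\<H>\<close>. Conversely, every cut costs at least as much as \<open>C\<^sub>W\<close> for
  \<open>W\<close> its set of vertices: a node \<open>x\<^sub>U\<close> on the source side with \<open>U \<not>\<subseteq> W\<close> cuts an infinite arc.
  Hence the vertex set \<open>W\<^sub>0\<close> of a minimum cut minimises \<open>\<zeta> |W| - \<tau>(W)\<close>, whose value at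
  \<open>W = {}\<close> is \<open>0\<close>: if \<open>W\<^sub>0 \<noteq> {}\<close> then \<open>\<zeta> \<le> \<rho>(W\<^sub>0)\<close>, and if \<open>W\<^sub>0 = {}\<close> then
  \<open>\<rho>(W) \<le> \<zeta>\<close> for every \<open>W\<close>.\<close>

lemma finite_instances: "finite E \<Longrightarrow> finite (instances E M \<delta> W)"
proof -
  assume "finite E"
  moreover have "instances E M \<delta> W \<subseteq> {xs. set xs \<subseteq> E \<and> length xs = length M}"
    by (auto simp: instances_def is_delta_instance_def induced_edges_def)
  ultimately show ?thesis
    using finite_lists_length_eq finite_subset by blast
qed

lemma inst_vertices_subset: "S \<in> instances E M \<delta> W \<Longrightarrow> inst_vertices S \<subseteq> W"
  unfolding instances_def is_delta_instance_def induced_edges_def inst_vertices_def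
  by force

lemma instances_mono: "W \<subseteq> W' \<Longrightarrow> instances E M \<delta> W \<subseteq> instances E M \<delta> W'"
  unfolding instances_def is_delta_instance_def induced_edges_def by blast

lemma instance_in_instances_inst_vertices:
  assumes "S \<in> instances E M \<delta> W"
  shows "S \<in> instances E M \<delta> (inst_vertices S)"
proof -
  have "set S \<subseteq> induced_edges E (inst_vertices S)"
    using assms unfolding instances_def is_delta_instance_def induced_edges_def inst_vertices_def
    by force
  then show ?thesis
    using assms unfolding instances_def is_delta_instance_def by blast
qed

lemma card_inst_vertices:
  "temporal_motif M k l \<Longrightarrow> S \<in> instances E M \<delta> W \<Longrightarrow> card (inst_vertices S) = k"
  unfolding instances_def is_delta_instance_def temporal_motif_def
  using bij_betw_same_card by blast

lemma inst_vertices_eq_if_card: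
  assumes M: "temporal_motif M k l" and S: "S \<in> instances E M \<delta> U" and "card U = k"
  shows "inst_vertices S = U"
proof -
  have "finite U"
    using M \<open>card U = k\<close> card.infinite by (fastforce simp: temporal_motif_def)
  then show ?thesis
    using inst_vertices_subset[OF S] card_inst_vertices[OF M S] \<open>card U = k\<close> card_subset_eq
    by metis
qed

lemma instances_empty: "temporal_motif M k l \<Longrightarrow> instances E M \<delta> {} = {}"
  using inst_vertices_subset card_inst_vertices by (fastforce simp: temporal_motif_def)

lemma tau_set_empty: "temporal_motif M k l \<Longrightarrow> tau_set E M \<delta> \<tau> {} = 0"
  by (simp add: tau_set_def instances_empty)

lemma tau_set_eq_sum_H_family:
  assumes M: "temporal_motif M k l" and "finite E" and W: "W \<subseteq> V"
  shows "tau_set E M \<delta> \<tau> W = (\<Sum>U\<in>{U\<in>H_family V E M \<delta> k. U \<subseteq> W}. tau_set E M \<delta> \<tau> U)"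
proof -
  let ?I = "instances E M \<delta>" and ?H = "{U\<in>H_family V E M \<delta> k. U \<subseteq> W}"
  have image: "inst_vertices ` ?I W = ?H"
  proof
    show "inst_vertices ` ?I W \<subseteq> ?H"
      using inst_vertices_subset card_inst_vertices[OF M] instance_in_instances_inst_vertices W
      unfolding H_family_def by blast
    show "?H \<subseteq> inst_vertices ` ?I W"
    proof
      fix U assume U: "U \<in> ?H"
      then obtain S where S: "S \<in> ?I U" by (auto simp: H_family_def)
      then have "inst_vertices S = U"
        using inst_vertices_eq_if_card[OF M] U by (auto simp: H_family_def)
      with S U instances_mono[of U W] show "U \<in> inst_vertices ` ?I W" by blast
    qed
  qed
  have fibre: "{S \<in> ?I W. inst_vertices S = U} = ?I U" if "U \<in> ?H" for U
  proof -
    from that have "U \<subseteq> W" "card U = k" by (auto simp: H_family_def)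
    then show ?thesis
      using instances_mono[of U W E M \<delta>] instance_in_instances_inst_vertices[of _ E M \<delta> W]
        inst_vertices_eq_if_card[OF M, of _ E \<delta> U] by blast
  qed
  have "tau_set E M \<delta> \<tau> W = (\<Sum>U\<in>inst_vertices ` ?I W. sum \<tau> {S \<in> ?I W. inst_vertices S = U})"
    unfolding tau_set_def using sum.image_gen[OF finite_instances[OF \<open>finite E\<close>]] by blast
  also have "\<dots> = (\<Sum>U\<in>?H. tau_set E M \<delta> \<tau> U)"
    unfolding image tau_set_def by (rule sum.cong) (simp_all add: fibre)
  finally show ?thesis .
qed

lemma sum_H_family_not_subset:
  assumes M: "temporal_motif M k l" and "finite E" "finite V" and W: "W \<subseteq> V"
  shows "(\<Sum>U\<in>{U\<in>H_family V E M \<delta> k. \<not> U \<subseteq> W}. tau_set E M \<delta> \<tau> U)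
           = tau_set E M \<delta> \<tau> V - tau_set E M \<delta> \<tau> W"
proof -
  let ?H = "H_family V E M \<delta> k" and ?t = "tau_set E M \<delta> \<tau>"
  have "?H \<subseteq> Pow V"
    by (auto simp: H_family_def)
  then have "finite ?H"
    using \<open>finite V\<close> by (meson finite_Pow_iff finite_subset)
  have "{U\<in>?H. U \<subseteq> V} = ?H"
    by (auto simp: H_family_def)
  then have "?t V = (\<Sum>U\<in>?H. ?t U)"
    using tau_set_eq_sum_H_family[OF M \<open>finite E\<close>, where W = V and V = V] by simp
  also have "\<dots> = (\<Sum>U\<in>{U\<in>?H. U \<subseteq> W}. ?t U) + (\<Sum>U\<in>{U\<in>?H. \<not> U \<subseteq> W}. ?t U)"
    using sum.Int_Diff[OF \<open>finite ?H\<close>, of ?t "{U. U \<subseteq> W}"]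
    by (simp add: Int_def set_diff_eq)
  finally show ?thesis
    using tau_set_eq_sum_H_family[OF M \<open>finite E\<close> W] by simp
qed

definition vertex_cut :: "'v set set \<Rightarrow> 'v set \<Rightarrow> 'v znode set" where
  "vertex_cut H W = insert Src (XU ` {U\<in>H. U \<subseteq> W} \<union> Vt ` W)"

lemma is_sz_cut_vertex_cut: "W \<subseteq> V \<Longrightarrow> is_sz_cut (Z_nodes V H) (vertex_cut H W)"
  by (auto simp: is_sz_cut_def Z_nodes_def vertex_cut_def)

lemma cut_capacity_vertex_cut:
  assumes "finite H" "finite V" "W \<subseteq> V"
  shows "cut_capacity (Z_nodes V H) (Z_arcs V H) (Z_cap tw \<zeta>) (vertex_cut H W)
           = ereal ((\<Sum>U\<in>{U\<in>H. \<not> U \<subseteq> W}. tw U) + \<zeta> * real (card W))"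
proof -
  let ?out = "{U\<in>H. \<not> U \<subseteq> W}"
  have arcs: "Z_arcs V H \<inter> (vertex_cut H W \<times> (Z_nodes V H - vertex_cut H W))
                = (\<lambda>U. (Src, XU U)) ` ?out \<union> (\<lambda>v. (Vt v, Sink)) ` W"
    using \<open>W \<subseteq> V\<close> by (auto simp: vertex_cut_def Z_arcs_def Z_nodes_def)
  have "finite W" using assms finite_subset by blast
  then have "cut_capacity (Z_nodes V H) (Z_arcs V H) (Z_cap tw \<zeta>) (vertex_cut H W)
      = sum (Z_cap tw \<zeta>) ((\<lambda>U. (Src, XU U)) ` ?out) + sum (Z_cap tw \<zeta>) ((\<lambda>v. (Vt v, Sink)) ` W)"
    unfolding cut_capacity_def arcs using \<open>finite H\<close> by (intro sum.union_disjoint) auto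
  also have "\<dots> = (\<Sum>U\<in>?out. ereal (tw U)) + (\<Sum>v\<in>W. ereal \<zeta>)"
    by (subst sum.reindex, simp add: inj_on_def)+ simp
  also have "\<dots> = ereal ((\<Sum>U\<in>?out. tw U) + \<zeta> * real (card W))"
    by (simp add: mult.commute)
  finally show ?thesis .
qed

lemma cut_capacity_vertex_cut_le:
  assumes "finite V" and H: "H \<subseteq> Pow V" and tw: "\<forall>U\<in>H. tw U \<ge> 0" and "\<zeta> \<ge> 0"
    and C: "is_sz_cut (Z_nodes V H) C"
  shows "cut_capacity (Z_nodes V H) (Z_arcs V H) (Z_cap tw \<zeta>) (vertex_cut H {v\<in>V. Vt v \<in> C})
           \<le> cut_capacity (Z_nodes V H) (Z_arcs V H) (Z_cap tw \<zeta>) C"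
proof -
  let ?N = "Z_nodes V H" and ?W = "{v\<in>V. Vt v \<in> C}"
  let ?arcs = "\<lambda>C. Z_arcs V H \<inter> (C \<times> (?N - C))"
  \<comment> \<open>an arc from \<open>XU U\<close> to \<open>Vt v\<close> cut by \<open>C\<close> pays for the arc from \<open>Src\<close> to \<open>XU U\<close>\<close>
  define source_arc where
    "source_arc = (\<lambda>(x, y). if x = Src \<or> y = Sink then (x, y) else (Src, x :: 'a znode))"
  have "finite H" using \<open>finite V\<close> H finite_subset by blast
  have "Z_arcs V H \<subseteq> ?N \<times> ?N"
    using H by (auto simp: Z_arcs_def Z_nodes_def)
  then have "finite (Z_arcs V H)"
    using \<open>finite V\<close> \<open>finite H\<close> finite_subset by (fastforce simp: Z_nodes_def)
  then have "finite (?arcs C)" "finite (?arcs (vertex_cut H ?W))"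
    by simp_all
  moreover have "\<forall>a\<in>?arcs C. 0 \<le> Z_cap tw \<zeta> a"
    using tw \<open>\<zeta> \<ge> 0\<close> by (auto simp: Z_arcs_def)
  moreover have "\<exists>b\<in>?arcs C. source_arc b = a \<and> Z_cap tw \<zeta> a \<le> Z_cap tw \<zeta> b"
    if a: "a \<in> ?arcs (vertex_cut H ?W)" for a
  proof -
    consider (src) U where "U \<in> H" "\<not> U \<subseteq> ?W" "a = (Src, XU U)"
      | (sink) v where "v \<in> ?W" "a = (Vt v, Sink)"
      using a H by (auto simp: vertex_cut_def Z_arcs_def Z_nodes_def)
    then show ?thesis
    proof cases
      case src
      show ?thesis
      proof (cases "XU U \<in> C")
        case True
        from src H obtain v where "v \<in> U" "Vt v \<notin> C" by blast
        with True src H C show ?thesis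
          by (intro bexI[of _ "(XU U, Vt v)"])
            (auto simp: source_arc_def Z_arcs_def Z_nodes_def is_sz_cut_def)
      next
        case False
        with src C show ?thesis
          by (intro bexI[of _ a]) (auto simp: source_arc_def Z_arcs_def Z_nodes_def is_sz_cut_def)
      qed
    next
      case sink
      with C show ?thesis
        by (intro bexI[of _ a]) (auto simp: source_arc_def Z_arcs_def Z_nodes_def is_sz_cut_def)
    qed
  qed
  ultimately show ?thesis
    unfolding cut_capacity_def by (intro sum_le_included[where i = source_arc]) auto
qed

lemma min_cut_vertex_set_minimal:
  assumes "finite V" and H: "H \<subseteq> Pow V" and tw: "\<forall>U\<in>H. tw U \<ge> 0" and "\<zeta> \<ge> 0"
    and C: "is_min_cut (Z_nodes V H) (Z_arcs V H) (Z_cap tw \<zeta>) C" and "W \<subseteq> V"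
  defines "W\<^sub>0 \<equiv> {v\<in>V. Vt v \<in> C}"
  shows "(\<Sum>U\<in>{U\<in>H. \<not> U \<subseteq> W\<^sub>0}. tw U) + \<zeta> * real (card W\<^sub>0)
           \<le> (\<Sum>U\<in>{U\<in>H. \<not> U \<subseteq> W}. tw U) + \<zeta> * real (card W)"
proof -
  let ?cap = "cut_capacity (Z_nodes V H) (Z_arcs V H) (Z_cap tw \<zeta>)"
  have "finite H" using \<open>finite V\<close> H finite_subset by blast
  have "ereal ((\<Sum>U\<in>{U\<in>H. \<not> U \<subseteq> W\<^sub>0}. tw U) + \<zeta> * real (card W\<^sub>0)) = ?cap (vertex_cut H W\<^sub>0)"
    using cut_capacity_vertex_cut[OF \<open>finite H\<close> \<open>finite V\<close>] by (simp add: W\<^sub>0_def)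
  also have "\<dots> \<le> ?cap C"
    using cut_capacity_vertex_cut_le[OF \<open>finite V\<close> H tw \<open>\<zeta> \<ge> 0\<close>] C
    by (simp add: W\<^sub>0_def is_min_cut_def)
  also have "\<dots> \<le> ?cap (vertex_cut H W)"
    using C is_sz_cut_vertex_cut[OF \<open>W \<subseteq> V\<close>] by (simp add: is_min_cut_def)
  also have "\<dots> = ereal ((\<Sum>U\<in>{U\<in>H. \<not> U \<subseteq> W}. tw U) + \<zeta> * real (card W))"
    using cut_capacity_vertex_cut[OF \<open>finite H\<close> \<open>finite V\<close> \<open>W \<subseteq> V\<close>] .
  finally show ?thesis by simp
qed

lemma threshold_Max_density:
  fixes f :: "'v set \<Rightarrow> real"
  assumes "finite V" "V \<noteq> {}" "f {} = 0" "W\<^sub>0 \<subseteq> V"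
    and min: "\<And>W. W \<subseteq> V \<Longrightarrow> \<zeta> * real (card W\<^sub>0) - f W\<^sub>0 \<le> \<zeta> * real (card W) - f W"
  defines "D \<equiv> {f W / real (card W) | W. W \<subseteq> V \<and> W \<noteq> {}}"
  shows "(W\<^sub>0 \<noteq> {} \<longrightarrow> \<zeta> \<le> Max D) \<and> (W\<^sub>0 = {} \<longrightarrow> Max D \<le> \<zeta>)"
proof (intro conjI impI)
  have "D = (\<lambda>W. f W / real (card W)) ` {W. W \<subseteq> V \<and> W \<noteq> {}}"
    by (auto simp: D_def)
  then have "finite D"
    using \<open>finite V\<close> by (simp add: finite_subset[of _ "Pow V"])
  have card_pos: "real (card W) > 0" if "W \<subseteq> V" "W \<noteq> {}" for W
    using that \<open>finite V\<close> by (simp add: card_gt_0_iff finite_subset)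
  {
    assume "W\<^sub>0 \<noteq> {}"
    have "\<zeta> * real (card W\<^sub>0) \<le> f W\<^sub>0"
      using min[of "{}"] \<open>f {} = 0\<close> by simp
    then have "\<zeta> \<le> f W\<^sub>0 / real (card W\<^sub>0)"
      using card_pos[OF \<open>W\<^sub>0 \<subseteq> V\<close> \<open>W\<^sub>0 \<noteq> {}\<close>] by (simp add: pos_le_divide_eq)
    also have "\<dots> \<le> Max D"
      using \<open>finite D\<close> \<open>W\<^sub>0 \<subseteq> V\<close> \<open>W\<^sub>0 \<noteq> {}\<close> by (intro Max_ge) (auto simp: D_def)
    finally show "\<zeta> \<le> Max D" .
  next
    assume "W\<^sub>0 = {}"
    have "d \<le> \<zeta>" if "d \<in> D" for d
    proof -
      from that obtain W where W: "W \<subseteq> V" "W \<noteq> {}" "d = f W / real (card W)"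
        by (auto simp: D_def)
      have "f W \<le> \<zeta> * real (card W)"
        using min[OF \<open>W \<subseteq> V\<close>] \<open>W\<^sub>0 = {}\<close> \<open>f {} = 0\<close> by simp
      then show "d \<le> \<zeta>"
        using W card_pos[OF W(1,2)] by (simp add: pos_divide_le_eq)
    qed
    moreover have "D \<noteq> {}"
      using \<open>V \<noteq> {}\<close> by (auto simp: D_def)
    ultimately show "Max D \<le> \<zeta>"
      using \<open>finite D\<close> by simp
  }
qed

theorem lemmaF1:
  fixes V :: "'v set" and E :: "'v tedge set" and M :: "('m \<times> 'm) list"
    and k l :: nat and \<delta> \<zeta> :: real and \<tau> :: "'v tedge list \<Rightarrow> real"
    and C :: "'v znode set"
  assumes "temporal_network V E"
    and "V \<noteq> {}"
    and "temporal_motif M k l"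
    and "\<delta> > 0"
    and "\<forall>S\<in>instances E M \<delta> V. \<tau> S > 0"
    and "\<zeta> \<ge> 0"
    and "is_min_cut (Z_nodes V (H_family V E M \<delta> k)) (Z_arcs V (H_family V E M \<delta> k))
           (Z_cap (tau_set E M \<delta> \<tau>) \<zeta>) C"
  shows "(C \<inter> Vt ` V \<noteq> {} \<longrightarrow> \<zeta> \<le> OPT V E M \<delta> \<tau>) \<and>
         (C \<inter> Vt ` V = {} \<longrightarrow> \<zeta> \<ge> OPT V E M \<delta> \<tau>)"
proof -
  let ?H = "H_family V E M \<delta> k" and ?t = "tau_set E M \<delta> \<tau>" and ?W\<^sub>0 = "{v\<in>V. Vt v \<in> C}"
  have "finite V" "finite E"
    using assms(1) by (auto simp: temporal_network_def)
  have H: "?H \<subseteq> Pow V"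
    by (auto simp: H_family_def)
  have "\<forall>U\<in>?H. ?t U \<ge> 0"
  proof
    fix U assume "U \<in> ?H"
    then have "instances E M \<delta> U \<subseteq> instances E M \<delta> V"
      using H instances_mono by blast
    then show "?t U \<ge> 0"
      using assms(5) unfolding tau_set_def by (intro sum_nonneg) (auto intro: less_imp_le)
  qed
  have minimal: "\<zeta> * real (card ?W\<^sub>0) - ?t ?W\<^sub>0 \<le> \<zeta> * real (card W) - ?t W" if "W \<subseteq> V" for W
  proof -
    have "?W\<^sub>0 \<subseteq> V" by blast
    with that show ?thesis
      using min_cut_vertex_set_minimal[OF \<open>finite V\<close> H \<open>\<forall>U\<in>?H. ?t U \<ge> 0\<close> assms(6,7) that]
        sum_H_family_not_subset[OF assms(3) \<open>finite E\<close> \<open>finite V\<close>] by simp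
  qed
  have "(?W\<^sub>0 \<noteq> {} \<longrightarrow> \<zeta> \<le> OPT V E M \<delta> \<tau>) \<and> (?W\<^sub>0 = {} \<longrightarrow> OPT V E M \<delta> \<tau> \<le> \<zeta>)"
    unfolding OPT_def density_def
    using threshold_Max_density[where f = ?t and W\<^sub>0 = ?W\<^sub>0,
        OF \<open>finite V\<close> assms(2) tau_set_empty[OF assms(3)] _ minimal]
    by blast
  moreover have "?W\<^sub>0 = {} \<longleftrightarrow> C \<inter> Vt ` V = {}"
    by blast
  ultimately show ?thesis
    by argo
qed

end
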